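(* Assume (A1), (B1) with $m_0=m$, and (B2), and suppose the limit $G$ has a density that is positive in a neighborhood of the origin. If (A3) does not hold, then $$\liminf_{n\to\infty}\mathbb P\big((\mathrm{P}_{b_n})\text{ has more than one optimal solution}\big)>0.$$
   Context: $A\in\mathbb{R}^{m\times d}$ of full rank $m\le d$, $b\in\mathbb{R}^m$, $c\in\mathbb{R}^d$; $(\mathrm{P}_\beta)$: $\min c^Tx$ s.t. $Ax=\beta,x\ge0$; $(\mathrm{D}_\beta)$: $\max\beta^T\lambda$ s.t. $A^T\lambda\le c$. A basis is $I\subseteq[d]$, $|I|=m$, $A_I$ invertible; $x(I,\beta)$ has coordinates $(A_I)^{-1}\beta$ on $I$ and $0$ elsewhere; $\lambda(I)=(A_I)^{-T}c_I$; $I$ is dual feasible if $A^T\lambda(I)\le c$. $I_1,\dots,I_K$ are the dual feasible bases with $x(I_k,b)\ge0$. (A1): the optimal set of $(\mathrm{P}_b)$ is non-empty and bounded. (A3): $\lambda(I_j)\ne\lambda(I_k)$ for $1\le j<k\le K$. Stochastic: $r_n\to\infty$, random $b_n\in\mathbb{R}^m$; (B1) with $m_0=m$: $r_n(b_n-b)\xrightarrow{D}G$ with $G$ absolutely continuous on $\mathbb{R}^m$; (B2): $\mathbb P((\mathrm{P}_{b_n})\text{ has an optimal solution})\to1$. *)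

theory Defs
  imports "HOL-Probability.Probability"
begin

definition lp_feasible :: "real^'d^'m \<Rightarrow> real^'m \<Rightarrow> (real^'d) set" where
  "lp_feasible A \<beta> = {x. A *v x = \<beta> \<and> (\<forall>j. 0 \<le> x $ j)}"

definition lp_optimal_set :: "real^'d^'m \<Rightarrow> real^'d \<Rightarrow> real^'m \<Rightarrow> (real^'d) set" where
  "lp_optimal_set A c \<beta> =
     {x \<in> lp_feasible A \<beta>. \<forall>y \<in> lp_feasible A \<beta>. c \<bullet> x \<le> c \<bullet> y}"

text \<open>Basis: I subset of column indices with |I| = m and A_I invertible, i.e. the
  linear map z (supported on I) \<mapsto> A z is a bijection onto R^m.\<close>

definition is_basis :: "real^'d^'m \<Rightarrow> 'd set \<Rightarrow> bool" where
  "is_basis A I \<longleftrightarrow> card I = CARD('m) \<and>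
     (\<forall>\<beta>. \<exists>!x. (\<forall>j. j \<notin> I \<longrightarrow> x $ j = 0) \<and> A *v x = \<beta>)"

text \<open>x(I,beta): equals (A_I)^{-1} beta on I and 0 elsewhere.\<close>
definition basic_sol :: "real^'d^'m \<Rightarrow> 'd set \<Rightarrow> real^'m \<Rightarrow> real^'d" where
  "basic_sol A I \<beta> = (THE x. (\<forall>j. j \<notin> I \<longrightarrow> x $ j = 0) \<and> A *v x = \<beta>)"

text \<open>lambda(I) = (A_I)^{-T} c_I, i.e. the unique lambda with (A^T lambda)_i = c_i for i in I.\<close>
definition dual_sol :: "real^'d^'m \<Rightarrow> real^'d \<Rightarrow> 'd set \<Rightarrow> real^'m" where
  "dual_sol A c I = (THE l. \<forall>i\<in>I. (transpose A *v l) $ i = c $ i)"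

definition dual_feasible_basis :: "real^'d^'m \<Rightarrow> real^'d \<Rightarrow> 'd set \<Rightarrow> bool" where
  "dual_feasible_basis A c I \<longleftrightarrow> is_basis A I \<and>
     (\<forall>j. (transpose A *v dual_sol A c I) $ j \<le> c $ j)"

definition opt_bases :: "real^'d^'m \<Rightarrow> real^'d \<Rightarrow> real^'m \<Rightarrow> 'd set set" where
  "opt_bases A c b = {I. dual_feasible_basis A c I \<and> (\<forall>j. 0 \<le> basic_sol A I b $ j)}"

definition cond_A3 :: "real^'d^'m \<Rightarrow> real^'d \<Rightarrow> real^'m \<Rightarrow> bool" where
  "cond_A3 A c b \<longleftrightarrow>
     (\<forall>I\<in>opt_bases A c b. \<forall>J\<in>opt_bases A c b. I \<noteq> J \<longrightarrow> dual_sol A c I \<noteq> dual_sol A c J)"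

definition conv_in_distr :: "'a measure \<Rightarrow> (nat \<Rightarrow> 'a \<Rightarrow> 'b::euclidean_space) \<Rightarrow> 'b measure \<Rightarrow> bool" where
  "conv_in_distr M X G \<longleftrightarrow>
     (\<forall>f :: 'b \<Rightarrow> real. continuous_on UNIV f \<and> bounded (range f) \<longrightarrow>
        (\<lambda>n. \<integral>\<omega>. f (X n \<omega>) \<partial>M) \<longlonglongrightarrow> (\<integral>x. f x \<partial>G))"

end

theory Submission
  imports Defs
begin

text \<open>Failure of (A3) gives two optimal bases \<open>I \<noteq> J\<close> with a common dual solution \<open>\<lambda>\<close>,
  which is therefore tight on the \<open>m + 1\<close> columns \<open>I \<union> {k}\<close> for some \<open>k \<in> J - I\<close>. Let \<open>p\<close> be
  the indicator vector of \<open>I \<union> {k}\<close>. For every right-hand side \<open>b + s u\<close> with \<open>s > 0\<close> and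
  \<open>u\<close> close to \<open>A p\<close> there is a feasible point strictly positive on \<open>I \<union> {k}\<close>; it is optimal
  by complementary slackness with \<open>\<lambda>\<close>, and moving it along the kernel of the columns
  \<open>I \<union> {k}\<close> gives a second optimum. Shrinking this cone of directions into the region where
  the density of \<open>G\<close> is positive, the probability that \<open>r\<^sub>n (b\<^sub>n - b)\<close> falls into it has
  positive \<open>liminf\<close> by convergence in distribution.\<close>

lemma basic_sol_spec:
  assumes "is_basis A I"
  shows "(\<forall>j. j \<notin> I \<longrightarrow> basic_sol A I \<beta> $ j = 0) \<and> A *v basic_sol A I \<beta> = \<beta>"
proof -
  have "\<exists>!x. (\<forall>j. j \<notin> I \<longrightarrow> x $ j = 0) \<and> A *v x = \<beta>"
    using assms unfolding is_basis_def by blast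
  then show ?thesis unfolding basic_sol_def by (rule theI')
qed

lemma basic_sol_unique:
  assumes "is_basis A I" "\<forall>j. j \<notin> I \<longrightarrow> x $ j = 0" "A *v x = \<beta>"
  shows "basic_sol A I \<beta> = x"
  using assms basic_sol_spec[OF assms(1), of \<beta>] unfolding is_basis_def by blast

lemma linear_basic_sol:
  assumes "is_basis A I"
  shows "linear (basic_sol A I)"
proof (rule linearI)
  fix x y
  show "basic_sol A I (x + y) = basic_sol A I x + basic_sol A I y"
    using basic_sol_spec[OF assms]
    by (intro basic_sol_unique[OF assms]) (auto simp: matrix_vector_right_distrib)
next
  fix s x
  show "basic_sol A I (s *\<^sub>R x) = s *\<^sub>R basic_sol A I x"
    using basic_sol_spec[OF assms]
    by (intro basic_sol_unique[OF assms]) (auto simp: matrix_vector_mult_scaleR)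
qed

lemma transpose_mult_inner: "(transpose A *v l) \<bullet> x = l \<bullet> (A *v x)" for A :: "real^'d^'m"
  unfolding transpose_matrix_vector by (rule dot_lmul_matrix)

lemma basis_dual_ex1:
  assumes B: "is_basis A I"
  shows "\<exists>!l. \<forall>i\<in>I. (transpose A *v l) $ i = c $ i"
proof (rule ex_ex1I)
  \<comment> \<open>The dual solution represents the functional \<open>\<beta> \<mapsto> c \<bullet> x(I, \<beta>)\<close>.\<close>
  define \<phi> where "\<phi> \<beta> = c \<bullet> basic_sol A I \<beta>" for \<beta>
  have "linear \<phi>"
    using linear_basic_sol[OF B] unfolding \<phi>_def by (simp add: linear_iff inner_add_right)
  then have \<phi>: "adjoint \<phi> 1 \<bullet> \<beta> = \<phi> \<beta>" for \<beta>
    using adjoint_clauses(2) by fastforce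
  have "(transpose A *v adjoint \<phi> 1) $ i = c $ i" if "i \<in> I" for i
  proof -
    have "basic_sol A I (A *v axis i 1) = axis i 1"
      by (rule basic_sol_unique[OF B]) (use that in \<open>auto simp: axis_def\<close>)
    then have "(transpose A *v adjoint \<phi> 1) \<bullet> axis i 1 = c \<bullet> axis i 1"
      by (simp only: transpose_mult_inner \<phi>) (simp add: \<phi>_def)
    then show ?thesis by (simp add: inner_axis)
  qed
  then show "\<exists>l. \<forall>i\<in>I. (transpose A *v l) $ i = c $ i" by blast
next
  fix l l'
  assume l: "\<forall>i\<in>I. (transpose A *v l) $ i = c $ i"
    and l': "\<forall>i\<in>I. (transpose A *v l') $ i = c $ i"
  have "(l - l') \<bullet> \<beta> = 0" for \<beta>
  proof -
    let ?x = "basic_sol A I \<beta>"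
    have "(l - l') \<bullet> \<beta> = (transpose A *v (l - l')) \<bullet> ?x"
      using basic_sol_spec[OF B, of \<beta>] by (simp add: transpose_mult_inner del: transpose_matrix_vector)
    also have "\<dots> = (\<Sum>i\<in>UNIV. (transpose A *v (l - l')) $ i * ?x $ i)"
      by (simp add: inner_vec_def)
    also have "\<dots> = 0"
    proof (intro sum.neutral ballI)
      fix i
      show "(transpose A *v (l - l')) $ i * ?x $ i = 0"
        using l l' basic_sol_spec[OF B, of \<beta>]
        by (cases "i \<in> I") (simp_all add: matrix_vector_mult_diff_distrib)
    qed
    finally show ?thesis .
  qed
  from this[of "l - l'"] show "l = l'" by simp
qed

lemma dual_sol_spec:
  assumes "is_basis A I"
  shows "\<forall>i\<in>I. (transpose A *v dual_sol A c I) $ i = c $ i"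
  unfolding dual_sol_def by (rule theI'[OF basis_dual_ex1[OF assms]])

lemma basis_kernel_vector:
  assumes B: "is_basis A I" and k: "k \<notin> I"
  obtains h where "A *v h = 0" "h $ k = 1" "\<forall>j. j \<notin> insert k I \<longrightarrow> h $ j = 0"
proof
  let ?h = "axis k 1 - basic_sol A I (A *v axis k 1)"
  show "A *v ?h = 0" "?h $ k = 1" "\<forall>j. j \<notin> insert k I \<longrightarrow> ?h $ j = 0"
    using basic_sol_spec[OF B, of "A *v axis k 1"] k
    by (auto simp: matrix_vector_mult_diff_distrib axis_def)
qed

definition lp_nonunique :: "real^'d^'m \<Rightarrow> real^'d \<Rightarrow> (real^'m) set" where
  "lp_nonunique A c = {\<beta>. \<exists>x\<in>lp_optimal_set A c \<beta>. \<exists>y\<in>lp_optimal_set A c \<beta>. x \<noteq> y}"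

lemma lp_optimal_of_complementary_slackness:
  fixes A :: "real^'d^'m"
  assumes dual: "\<forall>j. (transpose A *v l) $ j \<le> c $ j"
    and Ax: "A *v x = \<beta>" and x_nonneg: "\<forall>j. 0 \<le> x $ j"
    and slack: "\<forall>j. x $ j \<noteq> 0 \<longrightarrow> (transpose A *v l) $ j = c $ j"
  shows "x \<in> lp_optimal_set A c \<beta>"
proof -
  have cx: "c \<bullet> x = l \<bullet> \<beta>"
  proof -
    have "c \<bullet> x = (transpose A *v l) \<bullet> x"
      unfolding inner_vec_def by (rule sum.cong[OF refl]) (metis slack inner_real_def mult_zero_right)
    also have "\<dots> = l \<bullet> \<beta>" by (simp only: transpose_mult_inner Ax)
    finally show ?thesis .
  qed
  have "c \<bullet> x \<le> c \<bullet> z" if "z \<in> lp_feasible A \<beta>" for z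
  proof -
    have Az: "A *v z = \<beta>" and z_nonneg: "\<forall>j. 0 \<le> z $ j"
      using that by (auto simp: lp_feasible_def)
    have "c \<bullet> x = (transpose A *v l) \<bullet> z" using cx by (simp only: transpose_mult_inner Az)
    also have "\<dots> \<le> c \<bullet> z"
      unfolding inner_vec_def inner_real_def using dual z_nonneg
      by (intro sum_mono mult_right_mono) auto
    finally show ?thesis .
  qed
  then show ?thesis using Ax x_nonneg by (simp add: lp_optimal_set_def lp_feasible_def)
qed

text \<open>A dual solution tight on a support set \<open>S\<close> certifies optimality of every feasible point
  supported in \<open>S\<close>; a kernel direction within \<open>S\<close> moves a strictly positive such point
  to a second one.\<close>

lemma lp_nonunique_of_positive_support:
  fixes A :: "real^'d^'m"
  assumes dual: "\<forall>j. (transpose A *v l) $ j \<le> c $ j"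
    and tight: "\<forall>j\<in>S. (transpose A *v l) $ j = c $ j"
    and Ax: "A *v x = \<beta>" and x_pos: "\<forall>j\<in>S. 0 < x $ j" and x_supp: "\<forall>j. j \<notin> S \<longrightarrow> x $ j = 0"
    and Ah: "A *v h = 0" and h: "h \<noteq> 0" and h_supp: "\<forall>j. j \<notin> S \<longrightarrow> h $ j = 0"
  shows "\<beta> \<in> lp_nonunique A c"
proof -
  have "\<forall>\<^sub>F \<epsilon> in at_right 0. 0 < x $ j + \<epsilon> * h $ j" if "j \<in> S" for j
  proof (rule order_tendstoD)
    show "((\<lambda>\<epsilon>. x $ j + \<epsilon> * h $ j) \<longlongrightarrow> x $ j) (at_right 0)"
      by (rule tendsto_eq_intros refl)+ simp
  qed (use x_pos that in auto)
  then have "\<forall>\<^sub>F \<epsilon> in at_right 0. 0 < \<epsilon> \<and> (\<forall>j\<in>S. 0 < x $ j + \<epsilon> * h $ j)"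
    by (intro eventually_conj eventually_at_right_less eventually_ball_finite) auto
  then obtain \<epsilon> :: real where \<epsilon>: "0 < \<epsilon>" "\<forall>j\<in>S. 0 < x $ j + \<epsilon> * h $ j"
    using eventually_happens trivial_limit_at_right_real by blast
  define y where "y = x + \<epsilon> *\<^sub>R h"
  have x_nonneg: "\<forall>j. 0 \<le> x $ j"
    using x_pos x_supp by (metis less_imp_le order_refl)
  have x_opt: "x \<in> lp_optimal_set A c \<beta>"
    using x_supp tight by (intro lp_optimal_of_complementary_slackness[OF dual Ax x_nonneg]) auto
  have y_opt: "y \<in> lp_optimal_set A c \<beta>"
  proof (rule lp_optimal_of_complementary_slackness[OF dual])
    show "A *v y = \<beta>" by (simp add: y_def matrix_vector_right_distrib matrix_vector_mult_scaleR Ax Ah)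
    show "\<forall>j. 0 \<le> y $ j"
    proof
      fix j
      show "0 \<le> y $ j" using \<epsilon>(2) x_supp h_supp by (cases "j \<in> S") (auto simp: y_def less_imp_le)
    qed
    show "\<forall>j. y $ j \<noteq> 0 \<longrightarrow> (transpose A *v l) $ j = c $ j"
      using x_supp h_supp tight by (auto simp: y_def)
  qed
  have "x \<noteq> y" using \<epsilon>(1) h by (simp add: y_def)
  then show ?thesis using x_opt y_opt unfolding lp_nonunique_def by blast
qed

lemma lp_optimal_set_limit:
  fixes A :: "real^'d^'m"
  assumes opt: "\<And>n. x n \<in> lp_optimal_set A c (\<beta> n)"
    and x_lim: "x \<longlonglongrightarrow> x0" and \<beta>_lim: "\<beta> \<longlonglongrightarrow> \<beta>0"
  shows "x0 \<in> lp_optimal_set A c \<beta>0"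
proof -
  have Ax: "A *v x n = \<beta> n" and x_nonneg: "\<And>j. 0 \<le> x n $ j" for n
    using opt[of n] by (auto simp: lp_optimal_set_def lp_feasible_def)
  have "(\<lambda>n. A *v x n) \<longlonglongrightarrow> A *v x0"
    by (rule bounded_linear.tendsto[OF matrix_vector_mul_bounded_linear x_lim])
  then have Ax0: "A *v x0 = \<beta>0" using Ax \<beta>_lim LIMSEQ_unique by auto
  have x0_nonneg: "0 \<le> x0 $ j" for j
    using tendsto_vec_nth[OF x_lim] by (rule LIMSEQ_le_const) (use x_nonneg in auto)
  have "c \<bullet> x0 \<le> c \<bullet> z" if z: "z \<in> lp_feasible A \<beta>0" for z
  proof -
    have Az: "A *v z = \<beta>0" and z_nonneg: "\<And>j. 0 \<le> z $ j" using z by (auto simp: lp_feasible_def)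
    txt \<open>Shift \<open>x n\<close> halfway towards \<open>z\<close>; for large \<open>n\<close> this stays feasible for \<open>\<beta> n\<close>.\<close>
    have "\<forall>\<^sub>F n in sequentially. 0 \<le> x n $ j + (z $ j - x0 $ j) / 2" for j
    proof (cases "x0 $ j \<le> z $ j")
      case True then show ?thesis using x_nonneg by (auto intro!: always_eventually add_nonneg_nonneg)
    next
      case False
      then have "(x0 $ j - z $ j) / 2 < x0 $ j" using z_nonneg[of j] by simp
      with tendsto_vec_nth[OF x_lim] have "\<forall>\<^sub>F n in sequentially. (x0 $ j - z $ j) / 2 < x n $ j"
        by (rule order_tendstoD)
      then show ?thesis by eventually_elim (simp add: field_simps)
    qed
    then have "\<forall>\<^sub>F n in sequentially. \<forall>j. 0 \<le> x n $ j + (z $ j - x0 $ j) / 2"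
      by (rule eventually_all_finite)
    then obtain n where n: "\<forall>j. 0 \<le> x n $ j + (z $ j - x0 $ j) / 2"
      using eventually_sequentially by auto
    define w where "w = x n + (1/2) *\<^sub>R (z - x0)"
    have "A *v w = \<beta> n"
      by (simp add: w_def matrix_vector_right_distrib matrix_vector_mult_scaleR
          matrix_vector_mult_diff_distrib Ax Az Ax0)
    with n have "w \<in> lp_feasible A (\<beta> n)" by (simp add: lp_feasible_def w_def)
    then have "c \<bullet> x n \<le> c \<bullet> w" using opt[of n] by (auto simp: lp_optimal_set_def)
    then show ?thesis by (simp add: w_def inner_add_right inner_diff_right)
  qed
  then show ?thesis using Ax0 x0_nonneg by (simp add: lp_optimal_set_def lp_feasible_def)
qed

lemma closed_lp_optimal_graph:
  fixes A :: "real^'d^'m" and c :: "real^'d"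
  shows "closed {(\<beta>, x). x \<in> lp_optimal_set A c \<beta>}"
proof (subst closed_sequential_limits, intro allI impI, elim conjE)
  fix s :: "nat \<Rightarrow> (real^'m) \<times> (real^'d)" and l
  assume s_opt: "\<forall>n. s n \<in> {(\<beta>, x). x \<in> lp_optimal_set A c \<beta>}" and lim: "s \<longlonglongrightarrow> l"
  have "snd l \<in> lp_optimal_set A c (fst l)"
  proof (rule lp_optimal_set_limit[where x="\<lambda>n. snd (s n)" and \<beta>="\<lambda>n. fst (s n)"])
    show "snd (s n) \<in> lp_optimal_set A c (fst (s n))" for n
      using s_opt[rule_format, of n] by (simp add: case_prod_beta)
    show "(\<lambda>n. snd (s n)) \<longlonglongrightarrow> snd l" "(\<lambda>n. fst (s n)) \<longlonglongrightarrow> fst l"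
      by (fact tendsto_snd[OF lim], fact tendsto_fst[OF lim])
  qed
  then show "l \<in> {(\<beta>, x). x \<in> lp_optimal_set A c \<beta>}" by (cases l) simp
qed

text \<open>The nonuniqueness set is the projection of a \<open>\<sigma>\<close>-compact set of triples \<open>(\<beta>, x, y)\<close>.\<close>

lemma lp_nonunique_borel:
  fixes A :: "real^'d^'m" and c :: "real^'d"
  shows "lp_nonunique A c \<in> sets borel"
proof -
  define C :: "nat \<Rightarrow> ((real^'m) \<times> (real^'d) \<times> (real^'d)) set" where
    "C k = {(\<beta>, x, y). x \<in> lp_optimal_set A c \<beta> \<and> y \<in> lp_optimal_set A c \<beta> \<and>
      1 / real (Suc k) \<le> dist x y}" for k
  define T where "T k = C k \<inter> cball 0 (real k)" for k
  have C_eq: "C k = (\<lambda>(\<beta>, x, y). (\<beta>, x)) -` {(\<beta>, x). x \<in> lp_optimal_set A c \<beta>} \<inter>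
      (\<lambda>(\<beta>, x, y). (\<beta>, y)) -` {(\<beta>, x). x \<in> lp_optimal_set A c \<beta>} \<inter>
      {(\<beta>, x, y). 1 / real (Suc k) \<le> dist x y}" for k
    by (auto simp: C_def)
  have "closed (C k)" for k
    unfolding C_eq case_prod_beta
    by (intro closed_Int closed_vimage[OF closed_lp_optimal_graph[unfolded case_prod_beta]]
        closed_Collect_le continuous_intros)
  then have "compact (T k)" for k unfolding T_def by (intro closed_Int_compact compact_cball)
  then have "fst ` T k \<in> sets borel" for k
    by (intro borel_closed compact_imp_closed compact_continuous_image continuous_intros)
  moreover have "lp_nonunique A c = (\<Union>k. fst ` T k)"
  proof (intro equalityI subsetI)
    fix \<beta> assume "\<beta> \<in> lp_nonunique A c"
    then obtain x y where xy: "x \<in> lp_optimal_set A c \<beta>" "y \<in> lp_optimal_set A c \<beta>" "x \<noteq> y"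
      by (auto simp: lp_nonunique_def)
    obtain k0 where k0: "1 / real (Suc k0) < dist x y"
      using reals_Archimedean[of "dist x y"] xy(3) by (auto simp: inverse_eq_divide)
    obtain k1 where k1: "norm (\<beta>, x, y) \<le> real k1"
      using real_arch_simple by blast
    have "1 / real (Suc (max k0 k1)) \<le> 1 / real (Suc k0)" by (intro divide_left_mono) auto
    with k0 k1 xy have "(\<beta>, x, y) \<in> T (max k0 k1)" by (simp add: T_def C_def mem_cball_0)
    then show "\<beta> \<in> (\<Union>k. fst ` T k)" by (intro UN_I[OF UNIV_I] rev_image_eqI[of "(\<beta>, x, y)"]) simp_all
  next
    fix \<beta> assume "\<beta> \<in> (\<Union>k. fst ` T k)"
    then obtain k x y where "(\<beta>, x, y) \<in> T k" by auto
    then have "x \<in> lp_optimal_set A c \<beta>" "y \<in> lp_optimal_set A c \<beta>" "1 / real (Suc k) \<le> dist x y"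
      by (simp_all add: T_def C_def)
    moreover from this(3) have "x \<noteq> y" by (auto simp: divide_le_0_iff)
    ultimately show "\<beta> \<in> lp_nonunique A c" unfolding lp_nonunique_def by blast
  qed
  ultimately show ?thesis by auto
qed

lemma not_cond_A3_tight_dual:
  assumes "\<not> cond_A3 A c b"
  obtains I k l where "is_basis A I" "k \<notin> I"
    "\<forall>j. (transpose A *v l) $ j \<le> c $ j"
    "\<forall>j\<in>insert k I. (transpose A *v l) $ j = c $ j"
    "\<forall>j. 0 \<le> basic_sol A I b $ j"
proof -
  obtain I J where IJ: "I \<in> opt_bases A c b" "J \<in> opt_bases A c b" "I \<noteq> J"
      "dual_sol A c I = dual_sol A c J"
    using assms unfolding cond_A3_def by blast
  have BI: "is_basis A I" and BJ: "is_basis A J"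
    using IJ by (auto simp: opt_bases_def dual_feasible_basis_def)
  have "\<not> J \<subseteq> I"
  proof
    assume "J \<subseteq> I"
    moreover have "card J = card I" using BI BJ by (simp add: is_basis_def)
    ultimately have "J = I" by (intro card_subset_eq) auto
    then show False using IJ(3) by simp
  qed
  then obtain k where "k \<in> J" "k \<notin> I" by blast
  then show ?thesis
    using that[OF BI \<open>k \<notin> I\<close>, of "dual_sol A c I"] IJ
      dual_sol_spec[OF BI, of c] dual_sol_spec[OF BJ, of c]
    by (auto simp: opt_bases_def dual_feasible_basis_def)
qed

text \<open>The positive point is \<open>x(I, b) + s (p + w)\<close>, where \<open>w\<close> solves \<open>A w = u - A p\<close>
  within the basis \<open>I\<close> and is small for \<open>u\<close> near \<open>A p\<close>.\<close>

lemma lp_nonunique_cone_ball: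
  fixes A :: "real^'d^'m"
  assumes B: "is_basis A I" and k: "k \<notin> I"
    and dual: "\<forall>j. (transpose A *v l) $ j \<le> c $ j"
    and tight: "\<forall>j\<in>insert k I. (transpose A *v l) $ j = c $ j"
    and b_basic: "\<forall>j. 0 \<le> basic_sol A I b $ j"
  obtains u0 \<rho> where "0 < \<rho>" "\<forall>u\<in>ball u0 \<rho>. \<forall>s>0. b + s *\<^sub>R u \<in> lp_nonunique A c"
proof -
  obtain h where h: "A *v h = 0" "h $ k = 1" "\<forall>j. j \<notin> insert k I \<longrightarrow> h $ j = 0"
    using basis_kernel_vector[OF B k] .
  have "bounded_linear (basic_sol A I)"
    using linear_basic_sol[OF B] by (simp add: linear_conv_bounded_linear)
  then obtain K where K: "K > 0" "\<And>\<beta>. norm (basic_sol A I \<beta>) \<le> norm \<beta> * K"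
    using bounded_linear.pos_bounded by blast
  define p :: "real^'d" where "p = (\<chi> j. if j \<in> insert k I then 1 else 0)"
  have "b + s *\<^sub>R u \<in> lp_nonunique A c"
    if u: "u \<in> ball (A *v p) (1 / (2 * K))" and s: "0 < s" for u s
  proof -
    define w where "w = basic_sol A I (u - A *v p)"
    have w_spec: "\<forall>j. j \<notin> I \<longrightarrow> w $ j = 0" "A *v w = u - A *v p"
      using basic_sol_spec[OF B] by (auto simp: w_def)
    have "norm w \<le> norm (u - A *v p) * K" using K(2) by (simp add: w_def)
    also have "\<dots> \<le> 1 / (2 * K) * K"
      using u K(1) by (intro mult_right_mono) (auto simp: dist_norm norm_minus_commute)
    finally have w_small: "\<bar>w $ j\<bar> \<le> 1 / 2" for j
      using K(1) component_le_norm_cart[of w j] by simp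
    define x where "x = basic_sol A I b + s *\<^sub>R (p + w)"
    show ?thesis
    proof (rule lp_nonunique_of_positive_support[OF dual tight])
      have "A *v x = A *v basic_sol A I b + s *\<^sub>R (A *v p + A *v w)"
        by (simp add: x_def matrix_vector_right_distrib matrix_vector_mult_scaleR)
      then show "A *v x = b + s *\<^sub>R u"
        using basic_sol_spec[OF B, of b] w_spec(2) by simp
      show "\<forall>j\<in>insert k I. 0 < x $ j"
      proof
        fix j assume "j \<in> insert k I"
        then have "0 < p $ j + w $ j" using w_small[of j] by (simp add: p_def)
        then show "0 < x $ j" using b_basic s by (simp add: x_def add_nonneg_pos)
      qed
      show "\<forall>j. j \<notin> insert k I \<longrightarrow> x $ j = 0"
        using basic_sol_spec[OF B, of b] w_spec(1) by (simp add: x_def p_def)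
      show "A *v h = 0" "\<forall>j. j \<notin> insert k I \<longrightarrow> h $ j = 0" by (fact h(1), fact h(3))
      show "h \<noteq> 0" using h(2) by auto
    qed
  qed
  then show ?thesis using K(1) by (intro that[of "1 / (2 * K)" "A *v p"]) auto
qed

lemma cone_ball_shrink:
  fixes u0 :: "'a::real_normed_vector"
  assumes \<rho>: "0 < \<rho>" and cone: "\<forall>u\<in>ball u0 \<rho>. \<forall>s>0. P (s *\<^sub>R u)" and e: "0 < e"
  obtains u1 \<rho>1 where "0 < \<rho>1" "ball u1 \<rho>1 \<subseteq> ball 0 e" "\<forall>u\<in>ball u1 \<rho>1. \<forall>s>0. P (s *\<^sub>R u)"
proof
  define \<sigma> where "\<sigma> = e / (norm u0 + \<rho>)"
  have pos: "0 < norm u0 + \<rho>" using \<rho> by (simp add: add_nonneg_pos)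
  then have \<sigma>: "0 < \<sigma>" using e by (simp add: \<sigma>_def)
  show "0 < \<sigma> * \<rho>" using \<sigma> \<rho> by simp
  show "ball (\<sigma> *\<^sub>R u0) (\<sigma> * \<rho>) \<subseteq> ball 0 e"
  proof
    fix u assume "u \<in> ball (\<sigma> *\<^sub>R u0) (\<sigma> * \<rho>)"
    then have "norm u < \<sigma> * norm u0 + \<sigma> * \<rho>"
      using \<sigma> norm_triangle_sub[of u "\<sigma> *\<^sub>R u0"] by (auto simp: dist_norm norm_minus_commute)
    also have "\<dots> = \<sigma> * (norm u0 + \<rho>)" by (simp add: algebra_simps)
    also have "\<dots> = e" using pos by (simp add: \<sigma>_def)
    finally show "u \<in> ball 0 e" by simp
  qed
  show "\<forall>u\<in>ball (\<sigma> *\<^sub>R u0) (\<sigma> * \<rho>). \<forall>s>0. P (s *\<^sub>R u)"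
  proof (intro ballI allI impI)
    fix u s assume u: "u \<in> ball (\<sigma> *\<^sub>R u0) (\<sigma> * \<rho>)" and s: "0 < (s::real)"
    have "(1 / \<sigma>) *\<^sub>R u - u0 = (1 / \<sigma>) *\<^sub>R (u - \<sigma> *\<^sub>R u0)" using \<sigma> by (simp add: algebra_simps)
    then have "dist u0 ((1 / \<sigma>) *\<^sub>R u) = norm ((1 / \<sigma>) *\<^sub>R (u - \<sigma> *\<^sub>R u0))"
      by (metis dist_commute dist_norm)
    also have "\<dots> = dist (\<sigma> *\<^sub>R u0) u / \<sigma>"
      using \<sigma> by (simp add: dist_norm norm_minus_commute)
    also have "\<dots> < \<rho>" using u \<sigma> by (simp add: divide_less_eq mult.commute)
    finally have "(1 / \<sigma>) *\<^sub>R u \<in> ball u0 \<rho>" by simp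
    then have "P ((s * \<sigma>) *\<^sub>R ((1 / \<sigma>) *\<^sub>R u))" by (rule cone[rule_format]) (use s \<sigma> in auto)
    then show "P (s *\<^sub>R u)" using \<sigma> by simp
  qed
qed

lemma emeasure_density_ball_pos:
  fixes g :: "'a::euclidean_space \<Rightarrow> real"
  assumes g: "g \<in> borel_measurable lborel" and \<rho>: "0 < \<rho>" and pos: "\<forall>x\<in>ball u \<rho>. 0 < g x"
  shows "0 < emeasure (density lborel (\<lambda>x. ennreal (g x))) (ball u \<rho>)"
proof -
  have "(\<integral>\<^sup>+x. ennreal (g x) * indicator (ball u \<rho>) x \<partial>lborel) \<noteq> 0"
  proof
    assume "(\<integral>\<^sup>+x. ennreal (g x) * indicator (ball u \<rho>) x \<partial>lborel) = 0"
    then have "AE x in lborel. ennreal (g x) * indicator (ball u \<rho>) x = 0"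
      using g by (subst (asm) nn_integral_0_iff_AE) (measurable, auto intro!: borel_measurable_indicator)
    then have "AE x in lborel. x \<notin> ball u \<rho>"
    proof (rule eventually_mono)
      show "x \<notin> ball u \<rho>" if "ennreal (g x) * indicator (ball u \<rho>) x = 0" for x
      proof
        assume "x \<in> ball u \<rho>"
        with that have "g x \<le> 0" by (simp add: ennreal_eq_0_iff)
        with pos \<open>x \<in> ball u \<rho>\<close> show False by fastforce
      qed
    qed
    then have "emeasure lborel (ball u \<rho>) = 0"
      by (subst (asm) AE_iff_measurable[where N="ball u \<rho>"]) auto
    moreover have "0 < emeasure lborel (ball u \<rho>)"
      using \<rho> unit_ball_vol_pos[of "real DIM('a)"] by (simp add: emeasure_ball)
    ultimately show False by simp
  qed
  then show ?thesis using g by (simp add: emeasure_density zero_less_iff_neq_zero)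
qed

definition tent :: "'a::metric_space \<Rightarrow> real \<Rightarrow> 'a \<Rightarrow> real" where
  "tent u0 \<rho> u = max 0 (1 - dist u u0 / \<rho>)"

lemma continuous_on_tent: "0 < \<rho> \<Longrightarrow> continuous_on UNIV (tent u0 \<rho>)"
  unfolding tent_def by (intro continuous_intros) auto

lemma tent_nonneg: "0 \<le> tent u0 \<rho> u"
  by (simp add: tent_def)

lemma tent_le_1: "0 < \<rho> \<Longrightarrow> tent u0 \<rho> u \<le> 1"
  by (simp add: tent_def)

lemma abs_tent_le_1: "0 < \<rho> \<Longrightarrow> \<bar>tent u0 \<rho> u\<bar> \<le> 1"
  by (simp add: abs_of_nonneg tent_nonneg tent_le_1)

lemma tent_pos_iff: "0 < \<rho> \<Longrightarrow> 0 < tent u0 \<rho> u \<longleftrightarrow> u \<in> ball u0 \<rho>"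
  by (auto simp: tent_def dist_commute less_max_iff_disj field_simps)

lemma integral_tent_pos:
  fixes u0 :: "'b::euclidean_space"
  assumes G: "prob_space G" and G_sets: "sets G = sets borel"
    and \<rho>: "0 < \<rho>" and G_ball: "0 < emeasure G (ball u0 \<rho>)"
  shows "0 < (\<integral>x. tent u0 \<rho> x \<partial>G)"
proof -
  interpret G: prob_space G by (rule G)
  have "tent u0 \<rho> \<in> borel_measurable G"
    using borel_measurable_continuous_onI[OF continuous_on_tent[OF \<rho>]]
    by (simp add: measurable_cong_sets[OF G_sets])
  then have tent_int: "integrable G (tent u0 \<rho>)"
    using abs_tent_le_1[OF \<rho>] by (intro G.integrable_const_bound[where B=1]) auto
  have "(\<integral>x. tent u0 \<rho> x \<partial>G) \<noteq> 0"
  proof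
    assume "(\<integral>x. tent u0 \<rho> x \<partial>G) = 0"
    then have "AE x in G. tent u0 \<rho> x = 0"
      using integral_nonneg_eq_0_iff_AE[OF tent_int] by (simp add: tent_nonneg)
    then have "AE x in G. x \<notin> ball u0 \<rho>"
      by eventually_elim (metis tent_pos_iff[OF \<rho>] less_irrefl)
    moreover have "{x \<in> space G. \<not> x \<notin> ball u0 \<rho>} = ball u0 \<rho>"
      using sets_eq_imp_space_eq[OF G_sets] by auto
    ultimately have "emeasure G (ball u0 \<rho>) = 0"
      using AE_iff_measurable[of "ball u0 \<rho>" G] G_sets by simp
    with G_ball show False by simp
  qed
  then show ?thesis by (simp add: order_less_le tent_nonneg integral_nonneg_AE)
qed

text \<open>The tent function is a bounded continuous minorant of the indicator of the ball, so
  convergence in distribution bounds the probabilities from below by its positive \<open>G\<close>-integral.\<close>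

lemma liminf_prob_ball_pos:
  fixes X :: "nat \<Rightarrow> 'a \<Rightarrow> 'b::euclidean_space"
  assumes M: "prob_space M" and G: "prob_space G" and G_sets: "sets G = sets borel"
    and X: "\<And>n. X n \<in> borel_measurable M" and conv: "conv_in_distr M X G"
    and \<rho>: "0 < \<rho>" and G_ball: "0 < emeasure G (ball u0 \<rho>)"
  shows "0 < liminf (\<lambda>n. ereal (measure M {\<omega> \<in> space M. X n \<omega> \<in> ball u0 \<rho>}))"
proof -
  interpret M: prob_space M by (rule M)
  let ?f = "tent u0 \<rho>"
  define B where "B n = {\<omega> \<in> space M. X n \<omega> \<in> ball u0 \<rho>}" for n
  have "bounded (range ?f)"
    unfolding bounded_iff using abs_tent_le_1[OF \<rho>] by (intro exI[of _ 1]) auto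
  then have lim: "(\<lambda>n. \<integral>\<omega>. ?f (X n \<omega>) \<partial>M) \<longlonglongrightarrow> (\<integral>x. ?f x \<partial>G)"
    using conv continuous_on_tent[OF \<rho>] unfolding conv_in_distr_def by blast
  have le: "(\<integral>\<omega>. ?f (X n \<omega>) \<partial>M) \<le> measure M (B n)" for n
  proof -
    have "(\<integral>\<omega>. ?f (X n \<omega>) \<partial>M) \<le> (\<integral>\<omega>. indicator (B n) \<omega> \<partial>M)"
    proof (rule integral_mono)
      show "integrable M (\<lambda>\<omega>. ?f (X n \<omega>))"
        using abs_tent_le_1[OF \<rho>]
          measurable_comp[OF X borel_measurable_continuous_onI[OF continuous_on_tent[OF \<rho>]]]
        by (intro M.integrable_const_bound[where B=1]) (auto simp: comp_def)
      show "integrable M (indicat_real (B n))"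
        using X[of n] by (intro M.integrable_const_bound[where B=1]) (auto simp: B_def)
      show "?f (X n \<omega>) \<le> indicator (B n) \<omega>" if "\<omega> \<in> space M" for \<omega>
        using that tent_le_1[OF \<rho>] tent_nonneg tent_pos_iff[OF \<rho>, of u0 "X n \<omega>"]
        by (auto simp: B_def indicator_def not_less)
    qed
    also have "\<dots> = measure M (B n)" by (simp add: B_def Int_absorb2 Collect_restrict)
    finally show ?thesis .
  qed
  have "liminf (\<lambda>n. ereal (\<integral>\<omega>. ?f (X n \<omega>) \<partial>M)) = ereal (\<integral>x. ?f x \<partial>G)"
    using lim by (intro lim_imp_Liminf) (auto intro: tendsto_ereal)
  with integral_tent_pos[OF G G_sets \<rho> G_ball]
  have "0 < liminf (\<lambda>n. ereal (\<integral>\<omega>. ?f (X n \<omega>) \<partial>M))" by simp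
  also have "\<dots> \<le> liminf (\<lambda>n. ereal (measure M (B n)))"
    using le by (intro Liminf_mono) auto
  finally show ?thesis unfolding B_def .
qed

lemma measure_cone_event_le:
  fixes Y :: "'a \<Rightarrow> 'b::real_normed_vector"
  assumes Y: "Y \<in> borel_measurable M" and S: "S \<in> sets borel" and "finite_measure M"
    and cone: "\<forall>u\<in>U. \<forall>s>0. b + s *\<^sub>R u \<in> S" and t: "0 < t"
  shows "measure M {\<omega> \<in> space M. t *\<^sub>R (Y \<omega> - b) \<in> U} \<le> measure M {\<omega> \<in> space M. Y \<omega> \<in> S}"
proof (rule finite_measure.finite_measure_mono[OF \<open>finite_measure M\<close>])
  have "{\<omega> \<in> space M. Y \<omega> \<in> S} = Y -` S \<inter> space M" by blast
  then show "{\<omega> \<in> space M. Y \<omega> \<in> S} \<in> sets M" using measurable_sets[OF Y S] by simp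
  have "Y \<omega> \<in> S" if "t *\<^sub>R (Y \<omega> - b) \<in> U" for \<omega>
  proof -
    have "b + (1 / t) *\<^sub>R (t *\<^sub>R (Y \<omega> - b)) \<in> S"
      by (rule cone[rule_format, OF that]) (use t in simp)
    then show ?thesis using t by simp
  qed
  then show "{\<omega> \<in> space M. t *\<^sub>R (Y \<omega> - b) \<in> U} \<subseteq> {\<omega> \<in> space M. Y \<omega> \<in> S}" by blast
qed

theorem lemma5p5:
  fixes A :: "real^'d^'m" and b :: "real^'m" and c :: "real^'d"
    and M :: "'a measure" and r :: "nat \<Rightarrow> real" and bn :: "nat \<Rightarrow> 'a \<Rightarrow> real^'m"
    and G :: "(real^'m) measure" and g :: "real^'m \<Rightarrow> real"
  assumes full_rank: "rank A = CARD('m)" and m_le_d: "CARD('m) \<le> CARD('d)"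
    and A1: "lp_optimal_set A c b \<noteq> {}" "bounded (lp_optimal_set A c b)"
    and M: "prob_space M"
    and r: "filterlim r at_top sequentially"
    and bn_meas: "\<And>n. bn n \<in> borel_measurable M"
    and G_prob: "prob_space G"
    and g_meas: "g \<in> borel_measurable lborel" and g_nonneg: "\<And>x. 0 \<le> g x"
    and G_dens: "G = density lborel (\<lambda>x. ennreal (g x))"
    and g_pos: "\<exists>e>0. \<forall>x\<in>ball 0 e. 0 < g x"
    and B1: "conv_in_distr M (\<lambda>n \<omega>. r n *\<^sub>R (bn n \<omega> - b)) G"
    and B2: "(\<lambda>n. measure M {\<omega> \<in> space M. lp_optimal_set A c (bn n \<omega>) \<noteq> {}}) \<longlonglongrightarrow> 1"
    and not_A3: "\<not> cond_A3 A c b"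
  shows "0 < liminf (\<lambda>n. ereal (measure M
           {\<omega> \<in> space M. \<exists>x\<in>lp_optimal_set A c (bn n \<omega>).
                           \<exists>y\<in>lp_optimal_set A c (bn n \<omega>). x \<noteq> y}))"
proof -
  interpret M: prob_space M by (rule M)
  obtain e where e: "0 < e" "\<forall>x\<in>ball 0 e. 0 < g x" using g_pos by blast
  obtain I k l where Ikl: "is_basis A I" "k \<notin> I" "\<forall>j. (transpose A *v l) $ j \<le> c $ j"
      "\<forall>j\<in>insert k I. (transpose A *v l) $ j = c $ j" "\<forall>j. 0 \<le> basic_sol A I b $ j"
    using not_cond_A3_tight_dual[OF not_A3] .
  obtain u0 \<rho> where u0: "0 < \<rho>" "\<forall>u\<in>ball u0 \<rho>. \<forall>s>0. b + s *\<^sub>R u \<in> lp_nonunique A c"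
    using lp_nonunique_cone_ball[OF Ikl] .
  obtain u1 \<rho>1 where U: "0 < \<rho>1" "ball u1 \<rho>1 \<subseteq> ball 0 e"
      and cone: "\<forall>u\<in>ball u1 \<rho>1. \<forall>s>0. b + s *\<^sub>R u \<in> lp_nonunique A c"
    using cone_ball_shrink[where P = "\<lambda>v. b + v \<in> lp_nonunique A c", OF u0 e(1)] .
  define X where "X n \<omega> = r n *\<^sub>R (bn n \<omega> - b)" for n \<omega>
  have X_meas: "X n \<in> borel_measurable M" for n unfolding X_def using bn_meas[of n] by measurable
  have "0 < emeasure G (ball u1 \<rho>1)"
    unfolding G_dens using U(2) e(2) by (intro emeasure_density_ball_pos[OF g_meas U(1)]) blast
  moreover have "sets G = sets borel" using G_dens by simp
  moreover have "conv_in_distr M X G" using B1 by (simp add: X_def[abs_def])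
  ultimately have "0 < liminf (\<lambda>n. ereal (measure M {\<omega> \<in> space M. X n \<omega> \<in> ball u1 \<rho>1}))"
    using liminf_prob_ball_pos[OF M G_prob, of X] X_meas U(1) by blast
  also have "\<dots> \<le> liminf (\<lambda>n. ereal (measure M {\<omega> \<in> space M. bn n \<omega> \<in> lp_nonunique A c}))"
    using r[unfolded filterlim_at_top, rule_format, of 1]
      measure_cone_event_le[OF bn_meas lp_nonunique_borel M.finite_measure_axioms cone]
    by (intro Liminf_mono) (auto simp: X_def elim: eventually_mono)
  finally show ?thesis unfolding lp_nonunique_def by simp
qed

end
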